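(* Let ${\bm X}={\bm Y}$ be a finite pseudometric space with pseudometric $d_{\bm X}$ and let $C=d_{\bm X}$. Let $m^{\bm X}_\bullet,m^{\bm Y}_\bullet$ be irreducible and aperiodic Markov transition kernels on ${\bm X}$ with unique stationary distributions $\mu^{\bm X},\mu^{\bm Y}$. Define $C^{(0)}=C$ and $C^{(l)}_{ij}=d_{\mathrm W}(m^{\bm X}_i,m^{\bm Y}_j;C^{(l-1)})$ for $l\ge1$, and let $c=d^{(\infty)}_{\mathrm{WL}}\big(({\bm X},m^{\bm X}_\bullet,\mu^{\bm X}),({\bm Y},m^{\bm Y}_\bullet,\mu^{\bm Y});C\big)$. Then there exists $\rho\in[0,1)$, depending on $m^{\bm X}_\bullet$ and $m^{\bm Y}_\bullet$, such that for all $k\in\mathbb{N}$ and all $i,j$, $|C^{(k)}_{ij}-c|\le2\rho^k\|C\|_\infty$.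
   Context: $d_{\mathrm W}(\alpha,\beta;D)=\inf_{(X,Y)\in\mathcal{C}(\alpha,\beta)}\mathbb{E}\,D(X,Y)$ with $\mathcal{C}(\alpha,\beta)$ the set of couplings. For finite Markov chains $\mathcal{X}=({\bm X},m^{\bm X}_\bullet,\nu^{\bm X})$, $\mathcal{Y}=({\bm Y},m^{\bm Y}_\bullet,\nu^{\bm Y})$, a Markovian coupling is a (possibly time-inhomogeneous) Markov chain $(X_t,Y_t)_{t\in\mathbb{N}}$ on ${\bm X}\times{\bm Y}$ with $\mathrm{law}(X_0,Y_0)\in\mathcal{C}(\nu^{\bm X},\nu^{\bm Y})$ and, for all $t,x,y$, the conditional law of $(X_{t+1},Y_{t+1})$ given $(X_t,Y_t)=(x,y)$ in $\mathcal{C}(m^{\bm X}_x,m^{\bm Y}_y)$. $d^{(k)}_{\mathrm{WL}}(\mathcal{X},\mathcal{Y};C)=\inf\mathbb{E}\,C(X_k,Y_k)$ over Markovian couplings, and (for stationary chains) $d^{(\infty)}_{\mathrm{WL}}=\sup_{k}d^{(k)}_{\mathrm{WL}}=\lim_k d^{(k)}_{\mathrm{WL}}$. $\|C\|_\infty=\max_{i,j}|C_{ij}|$. *)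

theory Defs
  imports Complex_Main
begin

definition markov_kernel :: "('a::finite \<Rightarrow> 'a \<Rightarrow> real) \<Rightarrow> bool" where
  "markov_kernel m \<longleftrightarrow> (\<forall>x y. 0 \<le> m x y) \<and> (\<forall>x. (\<Sum>y\<in>UNIV. m x y) = 1)"

definition prob_vec :: "('a::finite \<Rightarrow> real) \<Rightarrow> bool" where
  "prob_vec \<mu> \<longleftrightarrow> (\<forall>x. 0 \<le> \<mu> x) \<and> (\<Sum>x\<in>UNIV. \<mu> x) = 1"

fun mpow :: "('a::finite \<Rightarrow> 'a \<Rightarrow> real) \<Rightarrow> nat \<Rightarrow> 'a \<Rightarrow> 'a \<Rightarrow> real" where
  "mpow m 0 = (\<lambda>x y. if x = y then 1 else 0)"
| "mpow m (Suc n) = (\<lambda>x z. \<Sum>y\<in>UNIV. mpow m n x y * m y z)"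

definition irreducible_kernel :: "('a::finite \<Rightarrow> 'a \<Rightarrow> real) \<Rightarrow> bool" where
  "irreducible_kernel m \<longleftrightarrow> (\<forall>x y. \<exists>n>0. mpow m n x y > 0)"

definition aperiodic_kernel :: "('a::finite \<Rightarrow> 'a \<Rightarrow> real) \<Rightarrow> bool" where
  "aperiodic_kernel m \<longleftrightarrow> (\<forall>x. Gcd {n. n > 0 \<and> mpow m n x x > 0} = 1)"

definition stationary :: "('a::finite \<Rightarrow> 'a \<Rightarrow> real) \<Rightarrow> ('a \<Rightarrow> real) \<Rightarrow> bool" where
  "stationary m \<mu> \<longleftrightarrow> prob_vec \<mu> \<and> (\<forall>y. (\<Sum>x\<in>UNIV. \<mu> x * m x y) = \<mu> y)"

definition pseudometric :: "('a \<Rightarrow> 'a \<Rightarrow> real) \<Rightarrow> bool" where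
  "pseudometric d \<longleftrightarrow> (\<forall>x. d x x = 0) \<and> (\<forall>x y. d x y = d y x)
     \<and> (\<forall>x y z. d x z \<le> d x y + d y z)"

definition coupling :: "('a::finite \<Rightarrow> 'b::finite \<Rightarrow> real) \<Rightarrow> ('a \<Rightarrow> real) \<Rightarrow> ('b \<Rightarrow> real) \<Rightarrow> bool" where
  "coupling p \<alpha> \<beta> \<longleftrightarrow> (\<forall>x y. 0 \<le> p x y) \<and> (\<forall>x. (\<Sum>y\<in>UNIV. p x y) = \<alpha> x)
     \<and> (\<forall>y. (\<Sum>x\<in>UNIV. p x y) = \<beta> y)"

definition dW :: "('a::finite \<Rightarrow> real) \<Rightarrow> ('b::finite \<Rightarrow> real) \<Rightarrow> ('a \<Rightarrow> 'b \<Rightarrow> real) \<Rightarrow> real" where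
  "dW \<alpha> \<beta> D = Inf {(\<Sum>x\<in>UNIV. \<Sum>y\<in>UNIV. p x y * D x y) | p. coupling p \<alpha> \<beta>}"

text \<open>Law at time t of a (time-inhomogeneous) Markov chain on the product space with
  initial law pi0 and transition kernels P t (x,y) (x',y').\<close>
fun claw :: "('a::finite \<Rightarrow> 'b::finite \<Rightarrow> real) \<Rightarrow> (nat \<Rightarrow> 'a \<Rightarrow> 'b \<Rightarrow> 'a \<Rightarrow> 'b \<Rightarrow> real)
              \<Rightarrow> nat \<Rightarrow> 'a \<Rightarrow> 'b \<Rightarrow> real" where
  "claw pi0 P 0 = pi0"
| "claw pi0 P (Suc t) = (\<lambda>x' y'. \<Sum>x\<in>UNIV. \<Sum>y\<in>UNIV. claw pi0 P t x y * P t x y x' y')"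

definition markovian_coupling ::
  "('a::finite \<Rightarrow> 'a \<Rightarrow> real) \<Rightarrow> ('a \<Rightarrow> real) \<Rightarrow> ('b::finite \<Rightarrow> 'b \<Rightarrow> real) \<Rightarrow> ('b \<Rightarrow> real)
   \<Rightarrow> ('a \<Rightarrow> 'b \<Rightarrow> real) \<Rightarrow> (nat \<Rightarrow> 'a \<Rightarrow> 'b \<Rightarrow> 'a \<Rightarrow> 'b \<Rightarrow> real) \<Rightarrow> bool" where
  "markovian_coupling mx nux my nuy pi0 P \<longleftrightarrow> coupling pi0 nux nuy
     \<and> (\<forall>t x y. coupling (P t x y) (mx x) (my y))"

definition dWL_k ::
  "nat \<Rightarrow> ('a::finite \<Rightarrow> 'a \<Rightarrow> real) \<Rightarrow> ('a \<Rightarrow> real) \<Rightarrow> ('b::finite \<Rightarrow> 'b \<Rightarrow> real) \<Rightarrow> ('b \<Rightarrow> real)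
   \<Rightarrow> ('a \<Rightarrow> 'b \<Rightarrow> real) \<Rightarrow> real" where
  "dWL_k k mx nux my nuy C = Inf {(\<Sum>x\<in>UNIV. \<Sum>y\<in>UNIV. claw pi0 P k x y * C x y) | pi0 P.
        markovian_coupling mx nux my nuy pi0 P}"

definition dWL_inf ::
  "('a::finite \<Rightarrow> 'a \<Rightarrow> real) \<Rightarrow> ('a \<Rightarrow> real) \<Rightarrow> ('b::finite \<Rightarrow> 'b \<Rightarrow> real) \<Rightarrow> ('b \<Rightarrow> real)
   \<Rightarrow> ('a \<Rightarrow> 'b \<Rightarrow> real) \<Rightarrow> real" where
  "dWL_inf mx nux my nuy C = (SUP k. dWL_k k mx nux my nuy C)"

fun Citer :: "('a::finite \<Rightarrow> 'a \<Rightarrow> real) \<Rightarrow> ('b::finite \<Rightarrow> 'b \<Rightarrow> real) \<Rightarrow> ('a \<Rightarrow> 'b \<Rightarrow> real)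
              \<Rightarrow> nat \<Rightarrow> 'a \<Rightarrow> 'b \<Rightarrow> real" where
  "Citer mx my C 0 = C"
| "Citer mx my C (Suc l) = (\<lambda>i j. dW (mx i) (my j) (Citer mx my C l))"

definition sup_norm :: "('a::finite \<Rightarrow> 'b::finite \<Rightarrow> real) \<Rightarrow> real" where
  "sup_norm C = Max {\<bar>C i j\<bar> | i j. True}"

end

theory Submission
  imports Defs
begin

text \<open>The iteration D \<mapsto> (\<lambda>i j. dW (mX i) (mY j) D) never lowers the smallest entry of D
  and never raises the largest one, and the value of dWL_inf lies between them for every
  iterate: a Markovian coupling from stationary laws pays at least the smallest entry of the
  k-th iterate after k steps, while gluing near-optimal one-step couplings pays at most its largest
  entry. Irreducible aperiodic kernels are primitive, so for some n all n-step transition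
  probabilities are at least some positive bound, and the product of the n-step kernels puts mass
  \<delta> > 0 on a minimiser of D (Doeblin's argument): the spread between largest and smallest
  entry contracts by 1 - \<delta> every n steps.\<close>

section \<open>Primitivity of irreducible aperiodic kernels\<close>

lemma mpow_add: "mpow m (a + b) x z = (\<Sum>y\<in>UNIV. mpow m a x y * mpow m b y z)"
proof (induction b arbitrary: z)
  case (Suc b)
  have "mpow m (a + Suc b) x z = (\<Sum>y\<in>UNIV. (\<Sum>w\<in>UNIV. mpow m a x w * mpow m b w y) * m y z)"
    using Suc by simp
  also have "\<dots> = (\<Sum>w\<in>UNIV. mpow m a x w * (\<Sum>y\<in>UNIV. mpow m b w y * m y z))"
    by (simp add: sum_distrib_left sum_distrib_right mult.assoc) (rule sum.swap)
  finally show ?case by simp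
qed (simp add: if_distrib[of "\<lambda>t. _ * t"] cong: if_cong)

lemma mpow_Suc_left: "mpow m (Suc n) x z = (\<Sum>y\<in>UNIV. m x y * mpow m n y z)"
  using mpow_add[of m 1 n x z] by (simp add: if_distrib[of "\<lambda>t. t * _"] cong: if_cong)

lemma mpow_nonneg: "markov_kernel m \<Longrightarrow> 0 \<le> mpow m n x y"
  by (induction n arbitrary: y) (auto simp: markov_kernel_def intro!: sum_nonneg)

lemma prob_vec_kernel_row: "markov_kernel m \<Longrightarrow> prob_vec (m x)"
  unfolding markov_kernel_def prob_vec_def by simp

lemma prob_vec_mpow:
  assumes "markov_kernel m"
  shows "prob_vec (mpow m n x)"
proof -
  have "(\<Sum>y\<in>UNIV. mpow m n x y) = 1"
  proof (induction n)
    case (Suc n)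
    have "(\<Sum>z\<in>UNIV. mpow m (Suc n) x z) = (\<Sum>y\<in>UNIV. mpow m n x y * (\<Sum>z\<in>UNIV. m y z))"
      by (simp add: sum_distrib_left) (rule sum.swap)
    then show ?case using Suc assms by (simp add: markov_kernel_def)
  qed simp
  then show ?thesis using mpow_nonneg[OF assms] by (simp add: prob_vec_def)
qed

lemma mpow_mult_le:
  assumes "markov_kernel m"
  shows "mpow m a x y * mpow m b y z \<le> mpow m (a + b) x z"
  unfolding mpow_add using assms
  by (intro member_le_sum) (auto intro!: mult_nonneg_nonneg mpow_nonneg)

lemma add_closed_add_mult_mem:
  fixes S :: "nat set"
  assumes add: "\<And>a b. a \<in> S \<Longrightarrow> b \<in> S \<Longrightarrow> a + b \<in> S" and "a \<in> S" "b \<in> S"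
  shows "b + q * a \<in> S"
proof (induction q)
  case (Suc q)
  then show ?case using add[OF Suc \<open>a \<in> S\<close>] by (simp add: algebra_simps)
qed (simp add: \<open>b \<in> S\<close>)

lemma add_closed_Gcd_eq_1_consecutive:
  fixes S :: "nat set"
  assumes add: "\<And>a b. a \<in> S \<Longrightarrow> b \<in> S \<Longrightarrow> a + b \<in> S"
    and pos: "\<And>a. a \<in> S \<Longrightarrow> 0 < a" and "S \<noteq> {}" and "Gcd S = 1"
  shows "\<exists>b\<in>S. b + 1 \<in> S"
proof -
  define gaps where "gaps = {g. 0 < g \<and> (\<exists>b\<in>S. b + g \<in> S)}"
  obtain s where s: "s \<in> S" using \<open>S \<noteq> {}\<close> by blast
  then have "s \<in> gaps" using add[OF s s] pos[OF s] unfolding gaps_def by auto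
  define g where "g = (LEAST g. g \<in> gaps)"
  have "g \<in> gaps" unfolding g_def using \<open>s \<in> gaps\<close> by (rule LeastI)
  then obtain b where "0 < g" and b: "b \<in> S" "b + g \<in> S" unfolding gaps_def by blast
  have "g dvd t" if t: "t \<in> S" for t
  proof (rule ccontr)
    assume "\<not> g dvd t"
    then have r: "0 < t mod g" "t mod g < g" using \<open>0 < g\<close> by (auto simp: dvd_eq_mod_eq_0)
    \<comment> \<open>Two elements of S differing by the remainder, a gap smaller than g.\<close>
    have "t + (t div g + 1) * b = (b + t div g * (b + g)) + t mod g"
      using div_mult_mod_eq[of t g] by (simp add: algebra_simps)
    moreover have "t + (t div g + 1) * b \<in> S" and c: "b + t div g * (b + g) \<in> S"
      using add_closed_add_mult_mem[OF add] t b by blast+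
    ultimately have "(b + t div g * (b + g)) + t mod g \<in> S" by metis
    then have "t mod g \<in> gaps" unfolding gaps_def using r(1) c by blast
    then show False using r(2) not_less_Least unfolding g_def by blast
  qed
  then have "g = 1" using \<open>Gcd S = 1\<close> by (metis Gcd_greatest nat_dvd_1_iff_1)
  then show ?thesis using b by blast
qed

lemma add_closed_Gcd_eq_1_eventually_mem:
  fixes S :: "nat set"
  assumes add: "\<And>a b. a \<in> S \<Longrightarrow> b \<in> S \<Longrightarrow> a + b \<in> S"
    and pos: "\<And>a. a \<in> S \<Longrightarrow> 0 < a" and "S \<noteq> {}" and "Gcd S = 1"
  shows "eventually (\<lambda>n. n \<in> S) sequentially"
proof -
  obtain b where b: "b \<in> S" "b + 1 \<in> S"
    using add_closed_Gcd_eq_1_consecutive[OF assms] by blast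
  have "n \<in> S" if n: "b * b \<le> n" for n
  proof -
    define q r where "q = n div b" and "r = n mod b"
    have "r < b" using pos[OF b(1)] unfolding r_def by simp
    moreover have "b \<le> q" using div_le_mono[OF n, of b] pos[OF b(1)] unfolding q_def by simp
    ultimately obtain c where "q = r + 1 + c" using le_Suc_ex[of "r + 1" q] by auto
    then have "n = (b + c * b) + r * (b + 1)"
      using div_mult_mod_eq[of n b] unfolding q_def[symmetric] r_def[symmetric] by (simp add: algebra_simps)
    moreover have "b + c * b + r * (b + 1) \<in> S"
      using add_closed_add_mult_mem[OF add] b by blast
    ultimately show ?thesis by simp
  qed
  then show ?thesis unfolding eventually_sequentially by blast
qed

lemma return_eventually_positive:
  assumes "markov_kernel m" "irreducible_kernel m" "aperiodic_kernel m"
  shows "eventually (\<lambda>n. 0 < mpow m n x x) sequentially"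
proof -
  let ?S = "{n. 0 < n \<and> 0 < mpow m n x x}"
  have "eventually (\<lambda>n. n \<in> ?S) sequentially"
  proof (rule add_closed_Gcd_eq_1_eventually_mem)
    fix a b assume "a \<in> ?S" "b \<in> ?S"
    then show "a + b \<in> ?S"
      using mpow_mult_le[OF assms(1), of a x x b x] by (auto intro: mult_pos_pos less_le_trans)
  next
    show "?S \<noteq> {}" using assms(2) unfolding irreducible_kernel_def by blast
  next
    show "Gcd ?S = 1" using assms(3) unfolding aperiodic_kernel_def by blast
  qed auto
  then show ?thesis by (rule eventually_mono) simp
qed

lemma primitive_kernel:
  assumes "markov_kernel m" "irreducible_kernel m" "aperiodic_kernel m"
  shows "eventually (\<lambda>n. \<forall>x y. 0 < mpow m n x y) sequentially"
proof (intro eventually_all_finite)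
  fix x y
  obtain r where r: "0 < mpow m r x y" using assms(2) unfolding irreducible_kernel_def by blast
  obtain N where N: "\<And>n. N \<le> n \<Longrightarrow> 0 < mpow m n x x"
    using return_eventually_positive[OF assms] unfolding eventually_sequentially by blast
  show "eventually (\<lambda>n. 0 < mpow m n x y) sequentially"
    unfolding eventually_sequentially
  proof (intro exI allI impI)
    fix n assume n: "N + r \<le> n"
    have "0 < mpow m (n - r) x x * mpow m r x y" using N[of "n - r"] n r by simp
    also have "\<dots> \<le> mpow m (n - r + r) x y" by (rule mpow_mult_le[OF assms(1)])
    finally show "0 < mpow m n x y" using n by simp
  qed
qed

lemma kernel_pair_minorization:
  fixes mX :: "'a::finite \<Rightarrow> 'a \<Rightarrow> real" and mY :: "'b::finite \<Rightarrow> 'b \<Rightarrow> real"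
  assumes "markov_kernel mX" "irreducible_kernel mX" "aperiodic_kernel mX"
    and "markov_kernel mY" "irreducible_kernel mY" "aperiodic_kernel mY"
  shows "\<exists>n>0. \<exists>\<delta>>0. \<forall>x x' y y'. \<delta> \<le> mpow mX n x x' * mpow mY n y y'"
proof -
  have "eventually (\<lambda>n. 0 < n \<and> (\<forall>x x'. 0 < mpow mX n x x') \<and> (\<forall>y y'. 0 < mpow mY n y y'))
          sequentially"
    using eventually_gt_at_top[of 0] primitive_kernel[OF assms(1-3)] primitive_kernel[OF assms(4-6)]
    by eventually_elim blast
  then obtain n where "0 < n" and pos: "\<And>x x' y y'. 0 < mpow mX n x x' * mpow mY n y y'"
    unfolding eventually_sequentially by (metis mult_pos_pos order_refl)
  define \<delta> where "\<delta> = Min (range (\<lambda>(x, x', y, y'). mpow mX n x x' * mpow mY n y y'))"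
  have "0 < \<delta>" unfolding \<delta>_def using pos by (simp add: Min_gr_iff)
  moreover have "\<delta> \<le> mpow mX n x x' * mpow mY n y y'" for x x' y y'
    unfolding \<delta>_def by (rule Min_le) (auto intro: image_eqI[where x = "(x, x', y, y')"])
  ultimately show ?thesis using \<open>0 < n\<close> by blast
qed

section \<open>Couplings and their cost\<close>

abbreviation cost :: "('a::finite \<Rightarrow> 'b::finite \<Rightarrow> real) \<Rightarrow> ('a \<Rightarrow> 'b \<Rightarrow> real) \<Rightarrow> real" where
  "cost p D \<equiv> \<Sum>x\<in>UNIV. \<Sum>y\<in>UNIV. p x y * D x y"

definition min_entry :: "('a::finite \<Rightarrow> 'b::finite \<Rightarrow> real) \<Rightarrow> real" where
  "min_entry D = Min (range (case_prod D))"

definition max_entry :: "('a::finite \<Rightarrow> 'b::finite \<Rightarrow> real) \<Rightarrow> real" where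
  "max_entry D = Max (range (case_prod D))"

definition spread :: "('a::finite \<Rightarrow> 'b::finite \<Rightarrow> real) \<Rightarrow> real" where
  "spread D = max_entry D - min_entry D"

lemma min_entry_le: "min_entry D \<le> D x y"
  unfolding min_entry_def by (rule Min_le) auto

lemma le_max_entry: "D x y \<le> max_entry D"
  unfolding max_entry_def by (rule Max_ge) auto

lemma min_entry_ge_iff: "c \<le> min_entry D \<longleftrightarrow> (\<forall>x y. c \<le> D x y)"
  unfolding min_entry_def by auto

lemma max_entry_le_iff: "max_entry D \<le> c \<longleftrightarrow> (\<forall>x y. D x y \<le> c)"
  unfolding max_entry_def by auto

lemma min_entry_attained: "\<exists>x y. D x y = min_entry D"
proof -
  have "min_entry D \<in> range (case_prod D)" unfolding min_entry_def by (rule Min_in) auto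
  then show ?thesis by (metis case_prod_beta rangeE)
qed

lemma spread_nonneg: "0 \<le> spread D"
  unfolding spread_def by (metis min_entry_le le_max_entry order_trans diff_ge_0_iff_ge)

lemma spread_le_sup_norm:
  assumes "\<And>x y. 0 \<le> D x y"
  shows "spread D \<le> sup_norm D"
proof -
  have "{\<bar>D x y\<bar> | x y. True} = range (\<lambda>(x, y). \<bar>D x y\<bar>)" by auto
  then have "\<bar>D x y\<bar> \<le> sup_norm D" for x y
    unfolding sup_norm_def by (metis (no_types) Max_ge case_prod_conv finite_UNIV finite_imageI rangeI)
  then have "D x y \<le> sup_norm D" for x y by (rule order_trans[OF abs_ge_self])
  then have "max_entry D \<le> sup_norm D" by (simp add: max_entry_le_iff)
  moreover have "0 \<le> min_entry D" using assms by (simp add: min_entry_ge_iff)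
  ultimately show ?thesis unfolding spread_def by simp
qed

lemma pseudometric_nonneg:
  assumes "pseudometric d"
  shows "0 \<le> d x y"
proof -
  have "d x x \<le> d x y + d y x" "d x x = 0" "d y x = d x y"
    using assms unfolding pseudometric_def by blast+
  then show ?thesis by linarith
qed

lemma coupling_product:
  assumes "prob_vec \<alpha>" "prob_vec \<beta>"
  shows "coupling (\<lambda>x y. \<alpha> x * \<beta> y) \<alpha> \<beta>"
  using assms unfolding coupling_def prob_vec_def
  by (simp add: sum_distrib_left[symmetric] sum_distrib_right[symmetric])

lemma cost_const:
  assumes "coupling p \<alpha> \<beta>" "prob_vec \<alpha>"
  shows "cost p (\<lambda>_ _. c) = c"
  using assms unfolding coupling_def prob_vec_def by (simp add: sum_distrib_right[symmetric])

lemma cost_mono: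
  assumes "\<And>x y. 0 \<le> p x y" "\<And>x y. D x y \<le> E x y"
  shows "cost p D \<le> cost p E"
  using assms by (intro sum_mono mult_left_mono) auto

lemma cost_add_const:
  assumes "coupling p \<alpha> \<beta>" "prob_vec \<alpha>"
  shows "cost p (\<lambda>x y. D x y + c) = cost p D + c"
  using cost_const[OF assms, of c] by (simp add: distrib_left sum.distrib)

lemma min_entry_le_cost:
  assumes "coupling p \<alpha> \<beta>" "prob_vec \<alpha>"
  shows "min_entry D \<le> cost p D"
proof -
  have "cost p (\<lambda>_ _. min_entry D) \<le> cost p D"
    using assms(1) min_entry_le unfolding coupling_def by (intro cost_mono) auto
  then show ?thesis using cost_const[OF assms] by simp
qed

lemma cost_le_max_entry:
  assumes "coupling p \<alpha> \<beta>" "prob_vec \<alpha>"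
  shows "cost p D \<le> max_entry D"
proof -
  have "cost p D \<le> cost p (\<lambda>_ _. max_entry D)"
    using assms(1) le_max_entry unfolding coupling_def by (intro cost_mono) auto
  then show ?thesis using cost_const[OF assms] by simp
qed

lemma cost_point_mass:
  "cost (\<lambda>x y. (if i = x then 1 else 0) * (if j = y then 1 else 0)) D = D i j"
proof -
  have "cost (\<lambda>x y. (if i = x then 1 else 0) * (if j = y then 1 else 0)) D
      = (\<Sum>x\<in>UNIV. (if i = x then 1 else 0) * (\<Sum>y\<in>UNIV. (if j = y then 1 else 0) * D x y))"
    by (simp only: sum_distrib_left mult.assoc)
  then show ?thesis by (simp add: if_distrib[of "\<lambda>t. t * _"] cong: if_cong)
qed

lemma single_le_cost:
  assumes "\<And>x y. 0 \<le> p x y" "\<And>x y. 0 \<le> E x y"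
  shows "p x0 y0 * E x0 y0 \<le> cost p E"
proof -
  have "p x0 y0 * E x0 y0 \<le> (\<Sum>y\<in>UNIV. p x0 y * E x0 y)"
    by (rule member_le_sum) (auto intro: mult_nonneg_nonneg assms)
  also have "\<dots> \<le> cost p E"
    by (rule member_le_sum[where f = "\<lambda>x. \<Sum>y\<in>UNIV. p x y * E x y"])
       (auto intro!: sum_nonneg mult_nonneg_nonneg assms)
  finally show ?thesis .
qed

lemma sum_swap3:
  "(\<Sum>a\<in>UNIV. \<Sum>b\<in>UNIV. \<Sum>c\<in>UNIV. f a b c) = (\<Sum>b\<in>UNIV. \<Sum>c\<in>UNIV. \<Sum>a\<in>UNIV. f a b c :: real)"
proof -
  have "(\<Sum>a\<in>UNIV. \<Sum>b\<in>UNIV. \<Sum>c\<in>UNIV. f a b c) = (\<Sum>b\<in>UNIV. \<Sum>a\<in>UNIV. \<Sum>c\<in>UNIV. f a b c)"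
    by (rule sum.swap)
  also have "\<dots> = (\<Sum>b\<in>UNIV. \<Sum>c\<in>UNIV. \<Sum>a\<in>UNIV. f a b c)"
    by (rule sum.cong[OF refl], rule sum.swap)
  finally show ?thesis .
qed

lemma sum_swap_pairs:
  "(\<Sum>x'\<in>UNIV. \<Sum>y'\<in>UNIV. \<Sum>x\<in>UNIV. \<Sum>y\<in>UNIV. f x y x' y') =
   (\<Sum>x\<in>UNIV. \<Sum>y\<in>UNIV. \<Sum>x'\<in>UNIV. \<Sum>y'\<in>UNIV. f x y x' y' :: real)"
proof -
  have "(\<Sum>x'\<in>UNIV. \<Sum>y'\<in>UNIV. \<Sum>x\<in>UNIV. \<Sum>y\<in>UNIV. f x y x' y') =
        (\<Sum>x'\<in>UNIV. \<Sum>x\<in>UNIV. \<Sum>y'\<in>UNIV. \<Sum>y\<in>UNIV. f x y x' y')"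
    by (rule sum.cong[OF refl], rule sum.swap)
  also have "\<dots> = (\<Sum>x\<in>UNIV. \<Sum>x'\<in>UNIV. \<Sum>y'\<in>UNIV. \<Sum>y\<in>UNIV. f x y x' y')"
    by (rule sum.swap)
  also have "\<dots> = (\<Sum>x\<in>UNIV. \<Sum>x'\<in>UNIV. \<Sum>y\<in>UNIV. \<Sum>y'\<in>UNIV. f x y x' y')"
    by (rule sum.cong[OF refl], rule sum.cong[OF refl], rule sum.swap)
  also have "\<dots> = (\<Sum>x\<in>UNIV. \<Sum>y\<in>UNIV. \<Sum>x'\<in>UNIV. \<Sum>y'\<in>UNIV. f x y x' y')"
    by (rule sum.cong[OF refl], rule sum.swap)
  finally show ?thesis .
qed

lemma cost_compose:
  "cost (\<lambda>x' y'. \<Sum>x\<in>UNIV. \<Sum>y\<in>UNIV. p x y * P x y x' y') D = cost p (\<lambda>x y. cost (P x y) D)"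
  by (simp add: sum_distrib_left sum_distrib_right mult.assoc
      sum_swap_pairs[of "\<lambda>x y x' y'. p x y * (P x y x' y' * D x' y')"])

lemma coupling_compose:
  assumes p: "coupling p \<alpha> \<beta>" and P: "\<And>x y. coupling (P x y) (mX x) (mY y)"
  shows "coupling (\<lambda>x' y'. \<Sum>x\<in>UNIV. \<Sum>y\<in>UNIV. p x y * P x y x' y')
           (\<lambda>x'. \<Sum>x\<in>UNIV. \<alpha> x * mX x x') (\<lambda>y'. \<Sum>y\<in>UNIV. \<beta> y * mY y y')"
proof -
  have "(\<Sum>y'\<in>UNIV. \<Sum>x\<in>UNIV. \<Sum>y\<in>UNIV. p x y * P x y x' y') = (\<Sum>x\<in>UNIV. \<alpha> x * mX x x')"
    for x'
  proof -
    have "(\<Sum>y'\<in>UNIV. \<Sum>x\<in>UNIV. \<Sum>y\<in>UNIV. p x y * P x y x' y')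
        = (\<Sum>x\<in>UNIV. \<Sum>y\<in>UNIV. p x y * mX x x')"
      using P unfolding sum_swap3 sum_distrib_left[symmetric] coupling_def by simp
    also have "\<dots> = (\<Sum>x\<in>UNIV. \<alpha> x * mX x x')"
      using p unfolding sum_distrib_right[symmetric] coupling_def by simp
    finally show ?thesis .
  qed
  moreover have "(\<Sum>x'\<in>UNIV. \<Sum>x\<in>UNIV. \<Sum>y\<in>UNIV. p x y * P x y x' y') = (\<Sum>y\<in>UNIV. \<beta> y * mY y y')"
    for y'
  proof -
    have "(\<Sum>x'\<in>UNIV. \<Sum>x\<in>UNIV. \<Sum>y\<in>UNIV. p x y * P x y x' y')
        = (\<Sum>x\<in>UNIV. \<Sum>y\<in>UNIV. p x y * mY y y')"
      using P unfolding sum_swap3 sum_distrib_left[symmetric] coupling_def by simp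
    also have "\<dots> = (\<Sum>y\<in>UNIV. \<Sum>x\<in>UNIV. p x y * mY y y')"
      by (rule sum.swap)
    also have "\<dots> = (\<Sum>y\<in>UNIV. \<beta> y * mY y y')"
      using p unfolding sum_distrib_right[symmetric] coupling_def by simp
    finally show ?thesis .
  qed
  ultimately show ?thesis
    using p P unfolding coupling_def by (auto intro!: sum_nonneg mult_nonneg_nonneg)
qed

lemma dW_le_cost:
  assumes "prob_vec \<alpha>" "coupling p \<alpha> \<beta>"
  shows "dW \<alpha> \<beta> D \<le> cost p D"
  unfolding dW_def
proof (rule cInf_lower)
  show "cost p D \<in> {cost p D |p. coupling p \<alpha> \<beta>}" using assms(2) by blast
  show "bdd_below {cost p D |p. coupling p \<alpha> \<beta>}"
    using min_entry_le_cost[OF _ assms(1)] unfolding bdd_below_def by blast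
qed

lemma min_entry_le_dW:
  assumes "prob_vec \<alpha>" "prob_vec \<beta>"
  shows "min_entry D \<le> dW \<alpha> \<beta> D"
  unfolding dW_def
  using coupling_product[OF assms] min_entry_le_cost[OF _ assms(1)] by (intro cInf_greatest) auto

lemma dW_le_max_entry:
  assumes "prob_vec \<alpha>" "prob_vec \<beta>"
  shows "dW \<alpha> \<beta> D \<le> max_entry D"
  using dW_le_cost[OF assms(1) coupling_product[OF assms]]
    cost_le_max_entry[OF coupling_product[OF assms] assms(1)] by (rule order_trans)

lemma dW_approx:
  assumes "prob_vec \<alpha>" "prob_vec \<beta>" "0 < e"
  shows "\<exists>p. coupling p \<alpha> \<beta> \<and> cost p D < dW \<alpha> \<beta> D + e"
proof -
  have "{cost p D |p. coupling p \<alpha> \<beta>} \<noteq> {}" using coupling_product[OF assms(1,2)] by blast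
  from cInf_lessD[OF this, of "dW \<alpha> \<beta> D + e"] show ?thesis
    using assms(3) unfolding dW_def by auto
qed

section \<open>Contraction of the iterated Wasserstein cost\<close>

lemma Citer_add: "Citer mX mY (Citer mX mY D k) n = Citer mX mY D (n + k)"
  by (induction n) auto

lemma power_div_le_root_power:
  fixes a :: real
  assumes "1 / 2 \<le> a" "a < 1" "0 < n"
  shows "a ^ (k div n) \<le> 2 * root n a ^ k"
proof -
  have "a ^ (k div n) = root n a ^ (n * (k div n))"
    using assms by (simp add: power_mult real_root_pow_pos2)
  also have "\<dots> \<le> 2 * (root n a ^ n * root n a ^ (n * (k div n)))"
    using assms by (simp add: real_root_pow_pos2)
  also have "\<dots> \<le> 2 * root n a ^ k"
  proof -
    have "k < n + n * (k div n)" using mult_div_mod_eq[of n k] mod_less_divisor[OF assms(3), of k]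
      by linarith
    then have "root n a ^ (n + n * (k div n)) \<le> root n a ^ k"
      using assms by (intro power_decreasing) auto
    then show ?thesis by (simp add: power_add)
  qed
  finally show ?thesis .
qed

locale markov_pair =
  fixes mX :: "'a::finite \<Rightarrow> 'a \<Rightarrow> real" and mY :: "'b::finite \<Rightarrow> 'b \<Rightarrow> real"
  assumes markov_X: "markov_kernel mX" and markov_Y: "markov_kernel mY"
begin

lemma min_entry_Citer_mono:
  assumes "k \<le> l"
  shows "min_entry (Citer mX mY D k) \<le> min_entry (Citer mX mY D l)"
proof (rule lift_Suc_mono_le[OF _ assms])
  show "min_entry (Citer mX mY D n) \<le> min_entry (Citer mX mY D (Suc n))" for n
    using min_entry_le_dW[OF prob_vec_kernel_row[OF markov_X] prob_vec_kernel_row[OF markov_Y]]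
    by (simp add: min_entry_ge_iff)
qed

lemma max_entry_Citer_antimono:
  assumes "k \<le> l"
  shows "max_entry (Citer mX mY D l) \<le> max_entry (Citer mX mY D k)"
proof (rule lift_Suc_antimono_le[OF _ assms])
  show "max_entry (Citer mX mY D (Suc n)) \<le> max_entry (Citer mX mY D n)" for n
    using dW_le_max_entry[OF prob_vec_kernel_row[OF markov_X] prob_vec_kernel_row[OF markov_Y]]
    by (simp add: max_entry_le_iff)
qed

lemma spread_Citer_antimono: "k \<le> l \<Longrightarrow> spread (Citer mX mY D l) \<le> spread (Citer mX mY D k)"
  using min_entry_Citer_mono[of k l D] max_entry_Citer_antimono[of k l D]
  unfolding spread_def by linarith

lemma Citer_le_cost_mpow:
  "Citer mX mY D n i j \<le> cost (\<lambda>x y. mpow mX n i x * mpow mY n j y) D"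
proof (induction n arbitrary: i j)
  case 0
  then show ?case using cost_point_mass[of i j D] by simp
next
  case (Suc n)
  let ?p = "\<lambda>x y. mX i x * mY j y"
  have p: "coupling ?p (mX i) (mY j)"
    by (rule coupling_product[OF prob_vec_kernel_row[OF markov_X] prob_vec_kernel_row[OF markov_Y]])
  have "Citer mX mY D (Suc n) i j \<le> cost ?p (Citer mX mY D n)"
    using dW_le_cost[OF prob_vec_kernel_row[OF markov_X] p] by simp
  also have "\<dots> \<le> cost ?p (\<lambda>x y. cost (\<lambda>x' y'. mpow mX n x x' * mpow mY n y y') D)"
    using p Suc unfolding coupling_def by (intro cost_mono) auto
  also have "\<dots> = cost (\<lambda>x' y'. mpow mX (Suc n) i x' * mpow mY (Suc n) j y') D"
    unfolding cost_compose[symmetric] mpow_Suc_left sum_product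
    by (simp add: mult_ac)
  finally show ?case .
qed

lemma spread_Citer_contract:
  assumes minor: "\<And>x x' y y'. \<delta> \<le> mpow mX n x x' * mpow mY n y y'"
  shows "spread (Citer mX mY D n) \<le> (1 - \<delta>) * spread D"
proof -
  obtain x0 y0 where min: "D x0 y0 = min_entry D" using min_entry_attained by blast
  have "Citer mX mY D n i j \<le> max_entry D - \<delta> * spread D" for i j
  proof -
    let ?p = "\<lambda>x y. mpow mX n i x * mpow mY n j y"
    have p: "coupling ?p (mpow mX n i) (mpow mY n j)"
      by (rule coupling_product[OF prob_vec_mpow[OF markov_X] prob_vec_mpow[OF markov_Y]])
    have "\<delta> * spread D \<le> ?p x0 y0 * (max_entry D - D x0 y0)"
      using minor spread_nonneg unfolding spread_def min by (intro mult_right_mono) auto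
    also have "\<dots> \<le> cost ?p (\<lambda>x y. max_entry D - D x y)"
      using p le_max_entry unfolding coupling_def by (intro single_le_cost) auto
    also have "\<dots> = max_entry D - cost ?p D"
      using cost_const[OF p prob_vec_mpow[OF markov_X]]
      by (simp add: right_diff_distrib sum_subtractf)
    finally show ?thesis using Citer_le_cost_mpow[of D n i j] by simp
  qed
  then have "max_entry (Citer mX mY D n) \<le> max_entry D - \<delta> * spread D"
    by (simp add: max_entry_le_iff)
  moreover have "min_entry D \<le> min_entry (Citer mX mY D n)"
    using min_entry_Citer_mono[of 0 n D] by simp
  ultimately show ?thesis unfolding spread_def by (simp add: algebra_simps)
qed

lemma spread_Citer_geometric:
  assumes "0 < n" "0 < \<delta>" and minor: "\<And>x x' y y'. \<delta> \<le> mpow mX n x x' * mpow mY n y y'"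
  shows "\<exists>\<rho>. 0 \<le> \<rho> \<and> \<rho> < 1 \<and> (\<forall>D k. spread (Citer mX mY D k) \<le> 2 * \<rho> ^ k * spread D)"
proof -
  define a where "a = 1 - min \<delta> (1 / 2)"
  have a: "1 / 2 \<le> a" "a < 1" unfolding a_def using \<open>0 < \<delta>\<close> by auto
  have "spread (Citer mX mY D (q * n)) \<le> a ^ q * spread D" for D q
  proof (induction q)
    case (Suc q)
    have "spread (Citer mX mY D (Suc q * n)) \<le> a * spread (Citer mX mY D (q * n))"
      using spread_Citer_contract[of "min \<delta> (1 / 2)" n "Citer mX mY D (q * n)"] minor
      by (simp add: Citer_add a_def min_le_iff_disj)
    also have "\<dots> \<le> a * (a ^ q * spread D)"
      using Suc a by (intro mult_left_mono) auto
    finally show ?case by simp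
  qed simp
  then have "spread (Citer mX mY D k) \<le> 2 * root n a ^ k * spread D" for D k
  proof -
    have "spread (Citer mX mY D k) \<le> spread (Citer mX mY D (k div n * n))"
      by (rule spread_Citer_antimono) (simp add: div_times_less_eq_dividend)
    also have "\<dots> \<le> a ^ (k div n) * spread D" by fact
    also have "\<dots> \<le> 2 * root n a ^ k * spread D"
      by (rule mult_right_mono[OF power_div_le_root_power[OF a \<open>0 < n\<close>] spread_nonneg])
    finally show ?thesis .
  qed
  moreover have "0 \<le> root n a" "root n a < 1" using a \<open>0 < n\<close> by auto
  ultimately show ?thesis by blast
qed

end

section \<open>Markovian couplings\<close>

lemma claw_cong: "(\<And>t. t < n \<Longrightarrow> P t = P' t) \<Longrightarrow> claw pi0 P n = claw pi0 P' n"
  by (induction n) auto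

lemma cost_claw_Suc: "cost (claw pi0 P (Suc t)) D = cost (claw pi0 P t) (\<lambda>x y. cost (P t x y) D)"
  by (simp add: cost_compose)

locale stationary_markov_pair = markov_pair mX mY
  for mX :: "'a::finite \<Rightarrow> 'a \<Rightarrow> real" and mY :: "'b::finite \<Rightarrow> 'b \<Rightarrow> real" +
  fixes muX :: "'a \<Rightarrow> real" and muY :: "'b \<Rightarrow> real"
  assumes stationary_X: "stationary mX muX" and stationary_Y: "stationary mY muY"
begin

lemma prob_vec_muX: "prob_vec muX" and prob_vec_muY: "prob_vec muY"
  using stationary_X stationary_Y unfolding stationary_def by auto

lemma coupling_claw:
  assumes "coupling pi0 muX muY" "\<And>t x y. coupling (P t x y) (mX x) (mY y)"
  shows "coupling (claw pi0 P t) muX muY"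
proof (induction t)
  case (Suc t)
  have "coupling (claw pi0 P (Suc t))
          (\<lambda>x'. \<Sum>x\<in>UNIV. muX x * mX x x') (\<lambda>y'. \<Sum>y\<in>UNIV. muY y * mY y y')"
    using coupling_compose[OF Suc assms(2)[of t]] by simp
  then show ?case using stationary_X stationary_Y by (simp add: stationary_def)
qed (simp add: assms(1))

lemma markovian_coupling_product:
  "markovian_coupling mX muX mY muY (\<lambda>x y. muX x * muY y) (\<lambda>t x y x' y'. mX x x' * mY y y')"
  unfolding markovian_coupling_def
  using coupling_product[OF prob_vec_muX prob_vec_muY]
    coupling_product[OF prob_vec_kernel_row[OF markov_X] prob_vec_kernel_row[OF markov_Y]] by simp

lemma cost_Citer_le_cost_claw:
  assumes "markovian_coupling mX muX mY muY pi0 P"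
  shows "cost pi0 (Citer mX mY D n) \<le> cost (claw pi0 P n) D"
proof (induction n arbitrary: D)
  case (Suc n)
  have pi0: "coupling pi0 muX muY" and P: "\<And>t x y. coupling (P t x y) (mX x) (mY y)"
    using assms unfolding markovian_coupling_def by auto
  have "cost pi0 (Citer mX mY D (Suc n)) = cost pi0 (Citer mX mY (Citer mX mY D 1) n)"
    by (simp only: Citer_add Suc_eq_plus1)
  also have "\<dots> \<le> cost (claw pi0 P n) (Citer mX mY D 1)" by (rule Suc)
  also have "\<dots> \<le> cost (claw pi0 P n) (\<lambda>x y. cost (P n x y) D)"
    using coupling_claw[OF pi0 P] dW_le_cost[OF prob_vec_kernel_row[OF markov_X] P]
    unfolding coupling_def by (intro cost_mono) auto
  also have "\<dots> = cost (claw pi0 P (Suc n)) D" by (rule cost_claw_Suc[symmetric])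
  finally show ?case .
qed simp

lemma claw_cost_approx:
  assumes "coupling pi0 muX muY" "0 < e"
  shows "\<exists>P. (\<forall>t x y. coupling (P t x y) (mX x) (mY y))
            \<and> cost (claw pi0 P n) D \<le> cost pi0 (Citer mX mY D n) + e"
  using assms(2)
proof (induction n arbitrary: D e)
  case 0
  have "coupling (\<lambda>x' y'. mX x x' * mY y y') (mX x) (mY y)" for x y
    using markovian_coupling_product unfolding markovian_coupling_def by blast
  then show ?case
    using \<open>0 < e\<close> by (intro exI[of _ "\<lambda>_ x y x' y'. mX x x' * mY y y'"]) simp
next
  case (Suc n)
  obtain P where P: "\<forall>t x y. coupling (P t x y) (mX x) (mY y)"
    and cost_P: "cost (claw pi0 P n) (Citer mX mY D 1) \<le> cost pi0 (Citer mX mY D (Suc n)) + e / 2"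
    using Suc.IH[of "e / 2" "Citer mX mY D 1"] Suc.prems unfolding Citer_add Suc_eq_plus1 by auto
  have "\<exists>Q. \<forall>x y. coupling (Q x y) (mX x) (mY y) \<and> cost (Q x y) D < dW (mX x) (mY y) D + e / 2"
    using dW_approx[OF prob_vec_kernel_row[OF markov_X] prob_vec_kernel_row[OF markov_Y]] Suc.prems
    by (intro choice allI) simp
  then obtain Q where Q: "\<And>x y. coupling (Q x y) (mX x) (mY y)"
    and cost_Q: "\<And>x y. cost (Q x y) D < dW (mX x) (mY y) D + e / 2"
    by blast
  have claw_n: "coupling (claw pi0 P n) muX muY" using coupling_claw[OF assms(1)] P by blast
  define P' where "P' = P(n := Q)"
  have "claw pi0 P' n = claw pi0 P n" unfolding P'_def by (rule claw_cong) simp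
  then have "cost (claw pi0 P' (Suc n)) D = cost (claw pi0 P n) (\<lambda>x y. cost (Q x y) D)"
    unfolding cost_claw_Suc by (simp add: P'_def)
  also have "\<dots> \<le> cost (claw pi0 P n) (\<lambda>x y. Citer mX mY D 1 x y + e / 2)"
    using claw_n cost_Q unfolding coupling_def by (intro cost_mono) (auto intro: less_imp_le)
  also have "\<dots> = cost (claw pi0 P n) (Citer mX mY D 1) + e / 2"
    by (rule cost_add_const[OF claw_n prob_vec_muX])
  also have "\<dots> \<le> cost pi0 (Citer mX mY D (Suc n)) + e" using cost_P by simp
  finally have "cost (claw pi0 P' (Suc n)) D \<le> cost pi0 (Citer mX mY D (Suc n)) + e" .
  moreover have "\<forall>t x y. coupling (P' t x y) (mX x) (mY y)" using P Q unfolding P'_def by simp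
  ultimately show ?case by blast
qed

lemma min_entry_Citer_le_cost_claw:
  assumes "markovian_coupling mX muX mY muY pi0 P"
  shows "min_entry (Citer mX mY D k) \<le> cost (claw pi0 P k) D"
proof -
  have "min_entry (Citer mX mY D k) \<le> cost pi0 (Citer mX mY D k)"
    using assms prob_vec_muX unfolding markovian_coupling_def by (blast intro: min_entry_le_cost)
  also have "\<dots> \<le> cost (claw pi0 P k) D" by (rule cost_Citer_le_cost_claw[OF assms])
  finally show ?thesis .
qed

lemma min_entry_Citer_le_dWL_k: "min_entry (Citer mX mY D k) \<le> dWL_k k mX muX mY muY D"
  unfolding dWL_k_def using markovian_coupling_product min_entry_Citer_le_cost_claw
  by (intro cInf_greatest) blast+

lemma dWL_k_le_cost_claw:
  assumes "markovian_coupling mX muX mY muY pi0 P"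
  shows "dWL_k k mX muX mY muY D \<le> cost (claw pi0 P k) D"
  unfolding dWL_k_def
proof (rule cInf_lower)
  show "cost (claw pi0 P k) D
          \<in> {cost (claw pi0 P k) D | pi0 P. markovian_coupling mX muX mY muY pi0 P}"
    using assms by blast
  show "bdd_below {cost (claw pi0 P k) D | pi0 P. markovian_coupling mX muX mY muY pi0 P}"
    using min_entry_Citer_le_cost_claw unfolding bdd_below_def by blast
qed

lemma dWL_k_le_cost:
  assumes "coupling pi0 muX muY"
  shows "dWL_k k mX muX mY muY D \<le> cost pi0 (Citer mX mY D k)"
proof (rule field_le_epsilon)
  fix e :: real assume "0 < e"
  then obtain P where P: "\<forall>t x y. coupling (P t x y) (mX x) (mY y)"
    and cost_P: "cost (claw pi0 P k) D \<le> cost pi0 (Citer mX mY D k) + e"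
    using claw_cost_approx[OF assms] by blast
  have "markovian_coupling mX muX mY muY pi0 P"
    using assms P unfolding markovian_coupling_def by blast
  from order_trans[OF dWL_k_le_cost_claw[OF this] cost_P]
  show "dWL_k k mX muX mY muY D \<le> cost pi0 (Citer mX mY D k) + e" .
qed

text \<open>The law reached after l - k near-optimal steps from the product coupling is again a
  coupling of the stationary laws, and its cost against the k-th iterate is nearly that of the
  product coupling against the l-th.\<close>
lemma dWL_k_le_max_entry_Citer:
  assumes "k \<le> l"
  shows "dWL_k k mX muX mY muY D \<le> max_entry (Citer mX mY D l)"
proof (rule field_le_epsilon)
  fix e :: real assume "0 < e"
  let ?pi = "\<lambda>x y. muX x * muY y"
  have pi: "coupling ?pi muX muY" by (rule coupling_product[OF prob_vec_muX prob_vec_muY])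
  obtain P where P: "\<forall>t x y. coupling (P t x y) (mX x) (mY y)"
    and cost_P: "cost (claw ?pi P (l - k)) (Citer mX mY D k)
                   \<le> cost ?pi (Citer mX mY (Citer mX mY D k) (l - k)) + e"
    using claw_cost_approx[OF pi \<open>0 < e\<close>] by blast
  have "dWL_k k mX muX mY muY D \<le> cost (claw ?pi P (l - k)) (Citer mX mY D k)"
    using coupling_claw[OF pi] P by (intro dWL_k_le_cost) blast
  also have "\<dots> \<le> cost ?pi (Citer mX mY D l) + e"
    using cost_P assms by (simp add: Citer_add)
  also have "\<dots> \<le> max_entry (Citer mX mY D l) + e"
    using cost_le_max_entry[OF pi prob_vec_muX] by simp
  finally show "dWL_k k mX muX mY muY D \<le> max_entry (Citer mX mY D l) + e" .
qed

lemma dWL_inf_bounds: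
  "min_entry (Citer mX mY D k) \<le> dWL_inf mX muX mY muY D"
  "dWL_inf mX muX mY muY D \<le> max_entry (Citer mX mY D k)"
proof -
  have upper: "dWL_k l mX muX mY muY D \<le> max_entry (Citer mX mY D k)" for l
  proof (cases "l \<le> k")
    case False
    then show ?thesis
      using dWL_k_le_max_entry_Citer[of l l D] max_entry_Citer_antimono[of k l D] by simp
  qed (rule dWL_k_le_max_entry_Citer)
  then have "bdd_above (range (\<lambda>l. dWL_k l mX muX mY muY D))" by (intro bdd_aboveI2)
  then have "dWL_k k mX muX mY muY D \<le> dWL_inf mX muX mY muY D"
    unfolding dWL_inf_def by (intro cSUP_upper) simp_all
  then show "min_entry (Citer mX mY D k) \<le> dWL_inf mX muX mY muY D"
    by (rule order_trans[OF min_entry_Citer_le_dWL_k])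
  show "dWL_inf mX muX mY muY D \<le> max_entry (Citer mX mY D k)"
    unfolding dWL_inf_def using upper by (intro cSUP_least) auto
qed

lemma abs_Citer_minus_dWL_inf_le_spread:
  "\<bar>Citer mX mY D k i j - dWL_inf mX muX mY muY D\<bar> \<le> spread (Citer mX mY D k)"
  using dWL_inf_bounds[of D k] min_entry_le[of "Citer mX mY D k" i j]
    le_max_entry[of "Citer mX mY D k" i j]
  unfolding spread_def by linarith

end

theorem theorem27:
  fixes mX mY :: "'a::finite \<Rightarrow> 'a \<Rightarrow> real" and muX muY :: "'a \<Rightarrow> real"
  assumes "markov_kernel mX" and "markov_kernel mY"
    and "irreducible_kernel mX" and "aperiodic_kernel mX"
    and "irreducible_kernel mY" and "aperiodic_kernel mY"
    and "stationary mX muX" and "\<forall>\<nu>. stationary mX \<nu> \<longrightarrow> \<nu> = muX"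
    and "stationary mY muY" and "\<forall>\<nu>. stationary mY \<nu> \<longrightarrow> \<nu> = muY"
  shows "\<exists>\<rho>::real. 0 \<le> \<rho> \<and> \<rho> < 1 \<and>
    (\<forall>d. pseudometric d \<longrightarrow>
       (\<forall>k i j. \<bar>Citer mX mY d k i j - dWL_inf mX muX mY muY d\<bar> \<le> 2 * \<rho> ^ k * sup_norm d))"
proof -
  interpret stationary_markov_pair mX mY muX muY
    using assms by unfold_locales
  obtain n \<delta> where "0 < n" "0 < \<delta>" "\<And>x x' y y'. \<delta> \<le> mpow mX n x x' * mpow mY n y y'"
    using kernel_pair_minorization[OF assms(1,3,4,2,5,6)] by blast
  then obtain \<rho> where \<rho>: "0 \<le> \<rho>" "\<rho> < 1"
    and geometric: "\<And>D k. spread (Citer mX mY D k) \<le> 2 * \<rho> ^ k * spread D"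
    using spread_Citer_geometric by blast
  have "\<bar>Citer mX mY d k i j - dWL_inf mX muX mY muY d\<bar> \<le> 2 * \<rho> ^ k * sup_norm d"
    if "pseudometric d" for d k i j
  proof -
    have "\<bar>Citer mX mY d k i j - dWL_inf mX muX mY muY d\<bar> \<le> spread (Citer mX mY d k)"
      by (rule abs_Citer_minus_dWL_inf_le_spread)
    also have "\<dots> \<le> 2 * \<rho> ^ k * spread d" by (rule geometric)
    also have "\<dots> \<le> 2 * \<rho> ^ k * sup_norm d"
      using spread_le_sup_norm pseudometric_nonneg[OF that] \<rho> by (intro mult_left_mono) auto
    finally show ?thesis .
  qed
  with \<rho> show ?thesis by blast
qed

end
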